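(* Let $(\mathcal{P},d)$ be a 1-2-metric and consider the greedy-routing network creation game on it with edge price $\alpha>0$. (i) If $\alpha<\tfrac12$, the Maximum Domination Set Graph is the unique Nash equilibrium. (ii) If $\alpha=\tfrac12$, the Greedy Equilibria are exactly the Domination Set Graphs, and the Nash equilibria are exactly the Domination Set Graphs in which $W_2^+(u)=\emptyset$ for every node $u$ (no node builds an edge to a node it reaches via a path of two 1-edges). (iii) If $\alpha>\tfrac12$, every Minimum Domination Set Graph is a Greedy Equilibrium.
   Context: A 1-2-metric is a finite metric space $(\mathcal{P},d)$ with $d(u,v)\in\{1,2\}$ for all distinct $u,v$; arcs of length 1 are 1-edges, of length 2 are 2-edges. Game: agents are the points of $\mathcal{P}$; agent $u$'s strategy is $S_u\subseteq\mathcal{P}\setminus\{u\}$; a profile defines the directed network with arcs $(u,v)$, $v\in S_u$, of length $d(u,v)$; networks are identified with profiles. A greedy path from $u$ to $v$ is a directed path $u=x_1,\dots,x_j=v$ of arcs with $d(x_i,v)>d(x_{i+1},v)$ for all $i$. $\mathrm{stretch}(u,v)$ is the minimum length of a greedy path from $u$ to $v$ divided by $d(u,v)$, or a fixed sufficiently large penalty constant $Z$ if none exists. Cost: $c_u=\sum_{v\ne u}\mathrm{stretch}(u,v)+\alpha|S_u|$. Nash equilibrium: no agent can strictly decrease its cost by changing its strategy. Greedy Equilibrium: no agent can strictly decrease its cost by adding one element to, deleting one element from, or swapping one element of its strategy. Notation for a network $G$ and node $u$: $N(u)$ = out-neighbours of $u$; $W_2(u)=\{v\in N(u):d(u,v)=2\}$;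 $W_{1\to1}(u)$ = nodes $w\ne u$ with some $v$ such that $d(u,v)=d(v,w)=1$ and $(u,v),(v,w)$ are arcs; $W_2^+(u)=W_2(u)\cap W_{1\to1}(u)$. $G^1_{-u}$ is the directed graph on $\mathcal{P}\setminus\{u\}$ with arc $(v,w)$ whenever $d(v,w)=1$. A vertex set $D$ of a directed graph $H$ is dominating if every vertex outside $D$ has an in-neighbour in $D$. A Domination Set Graph (DSG) is a network $G$ such that (i) $G$ contains every arc $(v,w)$ with $d(v,w)=1$; (ii) for every $u$, $N(u)$ is dominating in $G^1_{-u}$; (iii) for every $u$ there is no $N'\subseteq\mathcal{P}\setminus\{u\}$ obtained from $N(u)$ by deleting one element or replacing one element by another, such that $N'$ contains all $v$ with $d(u,v)=1$, $N'$ is dominating in $G^1_{-u}$, and $|\{v\in N':d(u,v)=2\}\cap W_{1\to1}(u)|<|W_2^+(u)|$. A Minimum Domination Set Graph (MinDSG) is a DSG in which for every $u$, $|W_2(u)|$ is minimum among all out-neighbourhoods $N'\subseteq\mathcal{P}\setminus\{u\}$ that contain all $v$ with $d(u,v)=1$ and are dominating in $G^1_{-u}$. The Maximum Domination Set Graph (MaxDSG) is the network containing every arc $(u,w)$, $u\ne w$, except the 2-edges $(u,w)$ for which some $v$ satisfies $d(u,v)=d(v,w)=1$. *)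

theory Defs
  imports Complex_Main
begin

definition one_two_metric :: "'a set \<Rightarrow> ('a \<Rightarrow> 'a \<Rightarrow> nat) \<Rightarrow> bool" where
  "one_two_metric P d \<longleftrightarrow> finite P \<and>
     (\<forall>u\<in>P. d u u = 0) \<and>
     (\<forall>u\<in>P. \<forall>v\<in>P. d u v = d v u) \<and>
     (\<forall>u\<in>P. \<forall>v\<in>P. u \<noteq> v \<longrightarrow> d u v \<in> {1, 2})"

text \<open>A strategy profile (= network): agent u buys arcs to the nodes in S u.\<close>
definition valid_profile :: "'a set \<Rightarrow> ('a \<Rightarrow> 'a set) \<Rightarrow> bool" where
  "valid_profile P S \<longleftrightarrow> (\<forall>u\<in>P. S u \<subseteq> P - {u})"

definition greedy_path :: "('a \<Rightarrow> 'a \<Rightarrow> nat) \<Rightarrow> ('a \<Rightarrow> 'a set) \<Rightarrow> 'a \<Rightarrow> 'a \<Rightarrow> 'a list \<Rightarrow> bool" where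
  "greedy_path d S u v xs \<longleftrightarrow> xs \<noteq> [] \<and> hd xs = u \<and> last xs = v \<and>
     (\<forall>i. Suc i < length xs \<longrightarrow> xs ! Suc i \<in> S (xs ! i) \<and> d (xs ! i) v > d (xs ! Suc i) v)"

definition path_length :: "('a \<Rightarrow> 'a \<Rightarrow> nat) \<Rightarrow> 'a list \<Rightarrow> nat" where
  "path_length d xs = (\<Sum>i<length xs - 1. d (xs ! i) (xs ! Suc i))"

definition stretch :: "real \<Rightarrow> ('a \<Rightarrow> 'a \<Rightarrow> nat) \<Rightarrow> ('a \<Rightarrow> 'a set) \<Rightarrow> 'a \<Rightarrow> 'a \<Rightarrow> real" where
  "stretch Z d S u v =
     (if \<exists>xs. greedy_path d S u v xs
      then real (LEAST l. \<exists>xs. greedy_path d S u v xs \<and> path_length d xs = l) / real (d u v)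
      else Z)"

definition cost :: "'a set \<Rightarrow> ('a \<Rightarrow> 'a \<Rightarrow> nat) \<Rightarrow> real \<Rightarrow> real \<Rightarrow> ('a \<Rightarrow> 'a set) \<Rightarrow> 'a \<Rightarrow> real" where
  "cost P d Z \<alpha> S u = (\<Sum>v\<in>P - {u}. stretch Z d S u v) + \<alpha> * real (card (S u))"

definition nash_eq :: "'a set \<Rightarrow> ('a \<Rightarrow> 'a \<Rightarrow> nat) \<Rightarrow> real \<Rightarrow> real \<Rightarrow> ('a \<Rightarrow> 'a set) \<Rightarrow> bool" where
  "nash_eq P d Z \<alpha> S \<longleftrightarrow> valid_profile P S \<and>
     (\<forall>u\<in>P. \<forall>S'. S' \<subseteq> P - {u} \<longrightarrow> cost P d Z \<alpha> S u \<le> cost P d Z \<alpha> (S(u := S')) u)"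

definition greedy_moves :: "'a set \<Rightarrow> 'a \<Rightarrow> 'a set \<Rightarrow> 'a set set" where
  "greedy_moves P u A =
     {A \<union> {y} | y. y \<in> P - {u} - A} \<union>
     {A - {x} | x. x \<in> A} \<union>
     {(A - {x}) \<union> {y} | x y. x \<in> A \<and> y \<in> P - {u} - A}"

definition greedy_eq :: "'a set \<Rightarrow> ('a \<Rightarrow> 'a \<Rightarrow> nat) \<Rightarrow> real \<Rightarrow> real \<Rightarrow> ('a \<Rightarrow> 'a set) \<Rightarrow> bool" where
  "greedy_eq P d Z \<alpha> S \<longleftrightarrow> valid_profile P S \<and>
     (\<forall>u\<in>P. \<forall>S'\<in>greedy_moves P u (S u). cost P d Z \<alpha> S u \<le> cost P d Z \<alpha> (S(u := S')) u)"

definition W2 :: "('a \<Rightarrow> 'a \<Rightarrow> nat) \<Rightarrow> ('a \<Rightarrow> 'a set) \<Rightarrow> 'a \<Rightarrow> 'a set" where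
  "W2 d S u = {v \<in> S u. d u v = 2}"

definition W11 :: "'a set \<Rightarrow> ('a \<Rightarrow> 'a \<Rightarrow> nat) \<Rightarrow> ('a \<Rightarrow> 'a set) \<Rightarrow> 'a \<Rightarrow> 'a set" where
  "W11 P d S u = {w \<in> P. w \<noteq> u \<and> (\<exists>v\<in>P. d u v = 1 \<and> d v w = 1 \<and> v \<in> S u \<and> w \<in> S v)}"

definition W2plus :: "'a set \<Rightarrow> ('a \<Rightarrow> 'a \<Rightarrow> nat) \<Rightarrow> ('a \<Rightarrow> 'a set) \<Rightarrow> 'a \<Rightarrow> 'a set" where
  "W2plus P d S u = W2 d S u \<inter> W11 P d S u"

text \<open>D is dominating in G^1_{-u} (vertex set P - {u}, arcs = 1-edges).\<close>
definition dominating1 :: "'a set \<Rightarrow> ('a \<Rightarrow> 'a \<Rightarrow> nat) \<Rightarrow> 'a \<Rightarrow> 'a set \<Rightarrow> bool" where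
  "dominating1 P d u D \<longleftrightarrow> D \<subseteq> P - {u} \<and>
     (\<forall>w\<in>P - {u}. w \<notin> D \<longrightarrow> (\<exists>v\<in>D. d v w = 1))"

definition DSG :: "'a set \<Rightarrow> ('a \<Rightarrow> 'a \<Rightarrow> nat) \<Rightarrow> ('a \<Rightarrow> 'a set) \<Rightarrow> bool" where
  "DSG P d S \<longleftrightarrow> valid_profile P S \<and>
     (\<forall>v\<in>P. \<forall>w\<in>P. v \<noteq> w \<longrightarrow> d v w = 1 \<longrightarrow> w \<in> S v) \<and>
     (\<forall>u\<in>P. dominating1 P d u (S u)) \<and>
     (\<forall>u\<in>P. \<not> (\<exists>N'.
        (N' \<in> {S u - {x} | x. x \<in> S u} \<or>
         N' \<in> {(S u - {x}) \<union> {y} | x y. x \<in> S u \<and> y \<in> P - {u} - S u}) \<and>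
        {v \<in> P. v \<noteq> u \<and> d u v = 1} \<subseteq> N' \<and>
        dominating1 P d u N' \<and>
        card ({v \<in> N'. d u v = 2} \<inter> W11 P d S u) < card (W2plus P d S u)))"

definition MinDSG :: "'a set \<Rightarrow> ('a \<Rightarrow> 'a \<Rightarrow> nat) \<Rightarrow> ('a \<Rightarrow> 'a set) \<Rightarrow> bool" where
  "MinDSG P d S \<longleftrightarrow> DSG P d S \<and>
     (\<forall>u\<in>P. \<forall>N'. N' \<subseteq> P - {u} \<longrightarrow> {v \<in> P. v \<noteq> u \<and> d u v = 1} \<subseteq> N' \<longrightarrow>
        dominating1 P d u N' \<longrightarrow> card (W2 d S u) \<le> card {v \<in> N'. d u v = 2})"

definition MaxDSG :: "'a set \<Rightarrow> ('a \<Rightarrow> 'a \<Rightarrow> nat) \<Rightarrow> 'a \<Rightarrow> 'a set" where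
  "MaxDSG P d u = {w \<in> P. w \<noteq> u \<and> \<not> (d u w = 2 \<and> (\<exists>v\<in>P. d u v = 1 \<and> d v w = 1))}"

end

theory Submission
  imports Defs
begin

(*
  In a 1-2-metric a greedy path has at most two arcs, so every stretch is 1, 3/2 or the
  penalty Z. Once Z exceeds every cost a strategy reaching all nodes can have, no best
  response leaves a node unreachable; hence in every equilibrium all 1-edges are bought and
  every out-neighbourhood N of a node u dominates the 1-edge graph. For such N the cost of u is

    const(u) + |N \<inter> far(u) \<inter> two_hop(u)| / 2 + (\<alpha> - 1/2) |N \<inter> far(u)|,

  where far(u) are the nodes at distance 2 and two_hop(u) those reached by a path of two
  1-edges. All three regimes are read off this formula: for \<alpha> < 1/2 it is minimised exactly
  by the MaxDSG neighbourhood, for \<alpha> = 1/2 only the number of 2-edges into W_{1\<rightarrow>1} counts,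
  which is the DSG condition, and for \<alpha> > 1/2 also the number of 2-edges counts, which the
  MinDSG condition minimises.
*)

lemma greedy_path_dist_decreasing:
  assumes "greedy_path d T u v xs" and "i < length xs"
  shows "d (xs ! i) v + i \<le> d u v"
  using assms(2)
proof (induction i)
  case 0
  then show ?case using assms(1) by (auto simp: greedy_path_def hd_conv_nth)
next
  case (Suc i)
  then have "d (xs ! i) v > d (xs ! Suc i) v" using assms(1) by (auto simp: greedy_path_def)
  then show ?case using Suc by simp
qed

lemma greedy_path_mono:
  "greedy_path d T u v xs \<Longrightarrow> (\<And>x. T x \<subseteq> T' x) \<Longrightarrow> greedy_path d T' u v xs"
  unfolding greedy_path_def by blast

lemma path_length_two_nodes [simp]: "path_length d [a, b] = d a b"
  by (simp add: path_length_def)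

lemma path_length_three_nodes [simp]: "path_length d [a, b, c] = d a b + d b c"
  by (simp add: path_length_def numeral_2_eq_2)

lemma stretch_eq_shortest:
  assumes "greedy_path d T u v xs" and "path_length d xs = k"
    and "\<And>ys. greedy_path d T u v ys \<Longrightarrow> k \<le> path_length d ys"
  shows "stretch Z d T u v = real k / real (d u v)"
proof -
  have "(LEAST l. \<exists>xs. greedy_path d T u v xs \<and> path_length d xs = l) = k"
    by (rule Least_equality) (use assms in auto)
  then show ?thesis using assms(1) by (auto simp: stretch_def)
qed

lemma nash_eq_imp_greedy_eq:
  assumes "nash_eq P d Z \<alpha> S"
  shows "greedy_eq P d Z \<alpha> S"
proof -
  have "S' \<subseteq> P - {u}" if "u \<in> P" "S' \<in> greedy_moves P u (S u)" for u S'
    using that assms by (auto simp: greedy_moves_def nash_eq_def valid_profile_def)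
  then show ?thesis using assms by (auto simp: greedy_eq_def nash_eq_def)
qed

locale one_two_metric_space =
  fixes P :: "'a set" and d :: "'a \<Rightarrow> 'a \<Rightarrow> nat"
  assumes one_two_metric: "one_two_metric P d"
begin

lemma finite_points: "finite P"
  using one_two_metric by (simp add: one_two_metric_def)

lemma dist_self: "u \<in> P \<Longrightarrow> d u u = 0"
  using one_two_metric by (simp add: one_two_metric_def)

lemma dist_cases: "u \<in> P \<Longrightarrow> v \<in> P \<Longrightarrow> u \<noteq> v \<Longrightarrow> d u v = 1 \<or> d u v = 2"
  using one_two_metric by (auto simp: one_two_metric_def)

text \<open>Greedy paths have at most two arcs: every arc strictly decreases the distance to
  the target, which starts at most at 2.\<close>
lemma greedy_path_iff:
  assumes u: "u \<in> P" and v: "v \<in> P" and uv: "u \<noteq> v"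
  shows "greedy_path d T u v xs \<longleftrightarrow> (xs = [u, v] \<and> v \<in> T u) \<or>
     (\<exists>x. xs = [u, x, v] \<and> x \<in> T u \<and> v \<in> T x \<and> d u v = 2 \<and> d x v = 1)"
proof
  assume gp: "greedy_path d T u v xs"
  have duv: "d u v = 1 \<or> d u v = 2" "d v v = 0" using dist_cases[OF u v uv] dist_self[OF v] by auto
  have ne: "xs \<noteq> []" and hd: "hd xs = u" and last: "last xs = v"
    using gp by (auto simp: greedy_path_def)
  have step: "\<And>i. Suc i < length xs \<Longrightarrow> xs ! Suc i \<in> T (xs ! i) \<and> d (xs ! i) v > d (xs ! Suc i) v"
    using gp by (auto simp: greedy_path_def)
  have "xs ! (length xs - 1) = v" using last ne by (simp add: last_conv_nth)
  then have "length xs - 1 \<le> d u v"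
    using greedy_path_dist_decreasing[OF gp, of "length xs - 1"] ne by simp
  moreover have "length xs \<noteq> 1" using hd last uv by (cases xs) auto
  ultimately consider a b where "xs = [a, b]" | a b c where "xs = [a, b, c]"
    using ne duv by (cases xs; cases "tl xs"; cases "tl (tl xs)") auto
  then show "(xs = [u, v] \<and> v \<in> T u) \<or>
     (\<exists>x. xs = [u, x, v] \<and> x \<in> T u \<and> v \<in> T x \<and> d u v = 2 \<and> d x v = 1)"
  proof cases
    case 1
    then show ?thesis using hd last step[of 0] by auto
  next
    case 2
    then show ?thesis using hd last step[of 0] step[of 1] duv by auto
  qed
next
  assume "(xs = [u, v] \<and> v \<in> T u) \<or>
     (\<exists>x. xs = [u, x, v] \<and> x \<in> T u \<and> v \<in> T x \<and> d u v = 2 \<and> d x v = 1)"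
  moreover have "d u v = 1 \<or> d u v = 2" "d v v = 0" using dist_cases[OF u v uv] dist_self[OF v] by auto
  ultimately show "greedy_path d T u v xs"
    unfolding greedy_path_def by (auto simp: less_Suc_eq nth_Cons split: nat.splits)
qed

lemma greedy_path_exists_iff:
  assumes "u \<in> P" and "v \<in> P" and "u \<noteq> v"
  shows "(\<exists>xs. greedy_path d T u v xs) \<longleftrightarrow>
    v \<in> T u \<or> (d u v = 2 \<and> (\<exists>x\<in>T u. v \<in> T x \<and> d x v = 1))"
  using greedy_path_iff[OF assms, of T] by blast

lemma greedy_path_length_ge:
  assumes u: "u \<in> P" and v: "v \<in> P" and uv: "u \<noteq> v" and Tu: "T u \<subseteq> P - {u}"
    and gp: "greedy_path d T u v xs"
  shows "d u v \<le> path_length d xs"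
proof -
  consider "xs = [u, v]" | x where "xs = [u, x, v]" "x \<in> T u" "d u v = 2" "d x v = 1"
    using greedy_path_iff[OF u v uv] gp by blast
  then show ?thesis
  proof cases
    case 2
    then have "x \<in> P" "x \<noteq> u" using Tu by auto
    then have "d u x \<noteq> 0" using dist_cases[OF u] by fastforce
    with 2 show ?thesis by simp
  qed simp
qed

lemma stretch_eq_1:
  assumes u: "u \<in> P" and v: "v \<in> P" and uv: "u \<noteq> v" and Tu: "T u \<subseteq> P - {u}"
    and short: "v \<in> T u \<or> (\<exists>x\<in>T u. d u x = 1 \<and> d x v = 1 \<and> v \<in> T x \<and> d u v = 2)"
  shows "stretch Z d T u v = 1"
proof -
  obtain xs where gp: "greedy_path d T u v xs" and len: "path_length d xs = d u v"
  proof (cases "v \<in> T u")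
    case True
    then show ?thesis using that greedy_path_iff[OF u v uv, of T "[u, v]"] by simp
  next
    case False
    then obtain x where "x \<in> T u" "d u x = 1" "d x v = 1" "v \<in> T x" "d u v = 2" using short by blast
    then show ?thesis using that greedy_path_iff[OF u v uv, of T "[u, x, v]"] by simp
  qed
  have "stretch Z d T u v = real (d u v) / real (d u v)"
    by (rule stretch_eq_shortest[OF gp len]) (rule greedy_path_length_ge[where T=T, OF u v uv Tu])
  then show ?thesis using dist_cases[OF u v uv] by auto
qed

lemma stretch_eq_3_halves:
  assumes u: "u \<in> P" and v: "v \<in> P" and uv: "u \<noteq> v" and Tu: "T u \<subseteq> P - {u}"
    and "v \<notin> T u" and "d u v = 2" and x: "x \<in> T u" "v \<in> T x" "d x v = 1"
    and no_short: "\<not> (\<exists>x\<in>T u. d u x = 1 \<and> d x v = 1 \<and> v \<in> T x)"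
  shows "stretch Z d T u v = 3/2"
proof -
  have long: "path_length d ys = 3" if gp: "greedy_path d T u v ys" for ys
  proof -
    obtain y where y: "ys = [u, y, v]" "y \<in> T u" "v \<in> T y" "d y v = 1"
      using greedy_path_iff[OF u v uv, of T ys] gp \<open>v \<notin> T u\<close> by auto
    then have "d u y = 2" using no_short dist_cases[OF u, of y] Tu by auto
    with y show ?thesis by simp
  qed
  have "greedy_path d T u v [u, x, v]"
    using greedy_path_iff[OF u v uv, of T "[u, x, v]"] x \<open>d u v = 2\<close> by auto
  then have "stretch Z d T u v = real 3 / real (d u v)"
    using long by (intro stretch_eq_shortest) auto
  then show ?thesis using \<open>d u v = 2\<close> by simp
qed

lemma stretch_if_reachable:
  assumes u: "u \<in> P" and v: "v \<in> P" and uv: "u \<noteq> v" and Tu: "T u \<subseteq> P - {u}"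
    and "\<exists>xs. greedy_path d T u v xs"
  shows "stretch Z d T u v \<in> {1, 3/2}"
proof (cases "v \<in> T u \<or> (\<exists>x\<in>T u. d u x = 1 \<and> d x v = 1 \<and> v \<in> T x \<and> d u v = 2)")
  case True
  then show ?thesis using stretch_eq_1[where T=T, OF u v uv Tu] by simp
next
  case False
  then obtain x where "x \<in> T u" "v \<in> T x" "d x v = 1" "d u v = 2" "v \<notin> T u"
    using greedy_path_exists_iff[OF u v uv] assms(5) by auto
  then show ?thesis using stretch_eq_3_halves[where T=T, OF u v uv Tu] False by auto
qed

definition near :: "'a \<Rightarrow> 'a set" where
  "near u = {v \<in> P. v \<noteq> u \<and> d u v = 1}"

definition far :: "'a \<Rightarrow> 'a set" where
  "far u = {v \<in> P. v \<noteq> u \<and> d u v = 2}"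

definition two_hop :: "'a \<Rightarrow> 'a set" where
  "two_hop u = {w \<in> P. \<exists>v\<in>P. d u v = 1 \<and> d v w = 1}"

definition unreachable :: "('a \<Rightarrow> 'a set) \<Rightarrow> 'a \<Rightarrow> 'a set" where
  "unreachable T u = {v \<in> P - {u}. \<not> (\<exists>xs. greedy_path d T u v xs)}"

definition builds_one_edges :: "('a \<Rightarrow> 'a set) \<Rightarrow> bool" where
  "builds_one_edges T \<longleftrightarrow> (\<forall>x\<in>P. near x \<subseteq> T x)"

lemma finite_unreachable: "finite (unreachable T u)"
  using finite_points by (auto simp: unreachable_def)

lemma cost_eq_penalty_plus_reachable:
  "cost P d Z \<alpha> T u = Z * card (unreachable T u)
     + (\<Sum>v\<in>P - {u} - unreachable T u. stretch Z d T u v) + \<alpha> * card (T u)"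
proof -
  have sub: "unreachable T u \<subseteq> P - {u}" by (auto simp: unreachable_def)
  have "(\<Sum>v\<in>P - {u}. stretch Z d T u v) = (\<Sum>v\<in>P - {u} - unreachable T u. stretch Z d T u v)
     + (\<Sum>v\<in>unreachable T u. stretch Z d T u v)"
    using sum.subset_diff[OF sub] finite_points by simp
  also have "(\<Sum>v\<in>unreachable T u. stretch Z d T u v) = (\<Sum>v\<in>unreachable T u. Z)"
    by (rule sum.cong) (auto simp: unreachable_def stretch_def)
  finally show ?thesis by (simp add: cost_def algebra_simps)
qed

lemma card_unreachable_insert_less:
  assumes u: "u \<in> P" and w: "w \<in> unreachable T u"
  shows "card (unreachable (T(u := insert w (T u))) u) < card (unreachable T u)"
proof -
  let ?T = "T(u := insert w (T u))"
  have "w \<in> P" "w \<noteq> u" using w by (auto simp: unreachable_def)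
  then have "w \<notin> unreachable ?T u"
    using greedy_path_exists_iff[OF u, of w ?T] by (auto simp: unreachable_def)
  moreover have "greedy_path d ?T u v xs" if "greedy_path d T u v xs" for v xs
    using that by (rule greedy_path_mono) auto
  then have "unreachable ?T u \<subseteq> unreachable T u" by (auto simp: unreachable_def)
  ultimately show ?thesis
    using w by (intro psubset_card_mono finite_unreachable) blast
qed

lemma no_unreachable_imp_dominating:
  assumes u: "u \<in> P" and Tu: "T u \<subseteq> P - {u}" and none: "unreachable T u = {}"
  shows "near u \<subseteq> T u" and "dominating1 P d u (T u)"
proof -
  have reach: "v \<in> T u \<or> (d u v = 2 \<and> (\<exists>x\<in>T u. v \<in> T x \<and> d x v = 1))"
    if "v \<in> P" "v \<noteq> u" for v
    using that none greedy_path_exists_iff[OF u, of v T] by (auto simp: unreachable_def)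
  show "near u \<subseteq> T u"
  proof
    fix v assume "v \<in> near u"
    then show "v \<in> T u" using reach[of v] by (auto simp: near_def)
  qed
  show "dominating1 P d u (T u)"
    unfolding dominating1_def
  proof (intro conjI ballI impI Tu)
    fix w assume "w \<in> P - {u}" "w \<notin> T u"
    then show "\<exists>v\<in>T u. d v w = 1" using reach[of w] by auto
  qed
qed

lemma no_unreachable_if_dominating:
  assumes u: "u \<in> P" and Tu: "T u \<subseteq> P - {u}" and T: "builds_one_edges T"
    and dom: "dominating1 P d u (T u)"
  shows "unreachable T u = {}"
proof -
  have "\<exists>xs. greedy_path d T u v xs" if v: "v \<in> P" "v \<noteq> u" "v \<notin> T u" for v
  proof -
    obtain x where x: "x \<in> T u" "d x v = 1" using dom v by (auto simp: dominating1_def)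
    have "x \<in> P" "x \<noteq> v" using x Tu v dist_self by auto
    then have "v \<in> T x" using T x v by (auto simp: builds_one_edges_def near_def)
    moreover have "near u \<subseteq> T u" using T u by (simp add: builds_one_edges_def)
    then have "d u v = 2" using v dist_cases[OF u, of v] by (auto simp: near_def)
    ultimately show ?thesis using greedy_path_exists_iff[OF u v(1)] v x by auto
  qed
  then show ?thesis using greedy_path_exists_iff[OF u] by (auto simp: unreachable_def)
qed

text \<open>Only the 2-distant nodes outside the out-neighbourhood without a 1-1 path from u
  need the detour over a 2-edge and a 1-edge.\<close>
lemma stretch_if_dominating:
  assumes u: "u \<in> P" and Tu: "T u \<subseteq> P - {u}" and T: "builds_one_edges T"
    and dom: "dominating1 P d u (T u)" and v: "v \<in> P - {u}"
  shows "stretch Z d T u v = 1 + (if v \<in> far u - T u - two_hop u then 1/2 else 0)"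
proof -
  have one_edge: "w \<in> T x" if "x \<in> P" "w \<in> P" "x \<noteq> w" "d x w = 1" for x w
    using T that by (auto simp: builds_one_edges_def near_def)
  show ?thesis
  proof (cases "v \<in> T u")
    case True
    then show ?thesis using stretch_eq_1[where T=T, OF u _ _ Tu] v by (auto simp: far_def)
  next
    case False
    then have "d u v \<noteq> 1" using one_edge[OF u] v by auto
    then have d2: "d u v = 2" using dist_cases[OF u, of v] v by auto
    obtain x where x: "x \<in> T u" "d x v = 1" using dom v False by (auto simp: dominating1_def)
    then have "x \<in> P" "x \<noteq> v" using Tu v dist_self by auto
    then have xv: "v \<in> T x" using one_edge x(2) v by auto
    show ?thesis
    proof (cases "v \<in> two_hop u")
      case True
      then obtain y where y: "y \<in> P" "d u y = 1" "d y v = 1" by (auto simp: two_hop_def)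
      then have "y \<noteq> u" "y \<noteq> v" using dist_self u v by auto
      then have "y \<in> T u" "v \<in> T y" using one_edge y u v by auto
      then have "stretch Z d T u v = 1"
        using stretch_eq_1[where T=T, OF u _ _ Tu, of v Z] v y d2 by auto
      then show ?thesis using True by simp
    next
      case False
      then have "\<not> (\<exists>x\<in>T u. d u x = 1 \<and> d x v = 1 \<and> v \<in> T x)"
        using Tu v by (auto simp: two_hop_def)
      then have "stretch Z d T u v = 3/2"
        using stretch_eq_3_halves[where T=T, OF u _ _ Tu \<open>v \<notin> T u\<close> d2 x(1) xv x(2)] v by auto
      moreover have "v \<in> far u - T u - two_hop u" using False \<open>v \<notin> T u\<close> d2 v by (auto simp: far_def)
      ultimately show ?thesis by simp
    qed
  qed
qed

lemma cost_if_dominating: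
  fixes Z \<alpha> :: real
  assumes u: "u \<in> P" and Tu: "T u \<subseteq> P - {u}" and T: "builds_one_edges T"
    and dom: "dominating1 P d u (T u)"
  shows "cost P d Z \<alpha> T u = card (P - {u}) + card (far u - T u - two_hop u) / 2 + \<alpha> * card (T u)"
proof -
  let ?B = "far u - T u - two_hop u"
  have "(\<Sum>v\<in>P - {u}. stretch Z d T u v) = (\<Sum>v\<in>P - {u}. 1 + (if v \<in> ?B then 1/2 else 0))"
    using stretch_if_dominating[OF u Tu T dom] by (intro sum.cong) auto
  also have "\<dots> = card (P - {u}) + (\<Sum>v\<in>P - {u}. if v \<in> ?B then 1/2 else 0)"
    by (simp add: sum.distrib)
  also have "(\<Sum>v\<in>P - {u}. if v \<in> ?B then 1/2 else 0) = (\<Sum>v\<in>{v \<in> P - {u}. v \<in> ?B}. (1/2::real))"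
    using finite_points by (intro sum.inter_filter[symmetric]) simp
  also have "{v \<in> P - {u}. v \<in> ?B} = ?B" by (auto simp: far_def)
  finally show ?thesis by (simp add: cost_def)
qed

lemma card_eq_near_plus_far:
  assumes u: "u \<in> P" and N: "N \<subseteq> P - {u}" and near: "near u \<subseteq> N"
  shows "card N = card (near u) + card (N \<inter> far u)"
proof -
  have "N = near u \<union> (N \<inter> far u)" using N near dist_cases[OF u] by (auto simp: near_def far_def)
  moreover have "near u \<inter> (N \<inter> far u) = {}" by (auto simp: near_def far_def)
  moreover have "finite N" using N finite_points finite_subset by blast
  ultimately show ?thesis by (metis card_Un_disjoint finite_Un)
qed

lemma card_far_outside_two_hop:
  "card (far u - N - two_hop u) + card (N \<inter> far u)
     = card (far u - two_hop u) + card (N \<inter> far u \<inter> two_hop u)"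
proof -
  have fin: "finite (far u)" using finite_points by (simp add: far_def)
  have "card (far u - two_hop u) = card ((far u - two_hop u) \<inter> N) + card (far u - two_hop u - N)"
    using fin by (intro card_Int_Diff) simp
  moreover have "card (N \<inter> far u) = card (N \<inter> far u \<inter> two_hop u) + card (N \<inter> far u - two_hop u)"
    using fin by (intro card_Int_Diff) simp
  moreover have "(far u - two_hop u) \<inter> N = N \<inter> far u - two_hop u"
    and "far u - two_hop u - N = far u - N - two_hop u" by auto
  ultimately show ?thesis by simp
qed

text \<open>Every 2-edge costs \<alpha> and saves 1/2 of stretch, unless its endpoint is already
  reached by a 1-1 path.\<close>
lemma cost_of_dominating_strategy:
  fixes Z \<alpha> :: real
  assumes u: "u \<in> P" and S: "builds_one_edges S"
    and N: "N \<subseteq> P - {u}" and near: "near u \<subseteq> N" and dom: "dominating1 P d u N"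
  shows "cost P d Z \<alpha> (S(u := N)) u = card (P - {u}) + \<alpha> * card (near u)
     + card (far u - two_hop u) / 2 + card (N \<inter> far u \<inter> two_hop u) / 2
     + (\<alpha> - 1/2) * card (N \<inter> far u)"
proof -
  have "builds_one_edges (S(u := N))" using S near by (auto simp: builds_one_edges_def)
  then have "cost P d Z \<alpha> (S(u := N)) u
      = card (P - {u}) + card (far u - N - two_hop u) / 2 + \<alpha> * card N"
    using cost_if_dominating[of u "S(u := N)"] u N dom by simp
  moreover have "real (card (far u - N - two_hop u)) + card (N \<inter> far u)
      = card (far u - two_hop u) + card (N \<inter> far u \<inter> two_hop u)"
    using card_far_outside_two_hop[of u N] by (metis of_nat_add)
  ultimately show ?thesis using card_eq_near_plus_far[OF u N near] by (simp add: field_simps)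
qed

lemma W2_eq: "S u \<subseteq> P - {u} \<Longrightarrow> W2 d S u = S u \<inter> far u"
  by (auto simp: W2_def far_def)

lemma W11_eq:
  assumes u: "u \<in> P" and S: "builds_one_edges S"
  shows "W11 P d S u = two_hop u - {u}"
proof
  show "W11 P d S u \<subseteq> two_hop u - {u}" by (auto simp: W11_def two_hop_def)
  show "two_hop u - {u} \<subseteq> W11 P d S u"
  proof
    fix w assume "w \<in> two_hop u - {u}"
    then obtain v where v: "v \<in> P" "d u v = 1" "d v w = 1" "w \<in> P" "w \<noteq> u"
      by (auto simp: two_hop_def)
    then have "v \<in> near u" "w \<in> near v" using u dist_self by (auto simp: near_def)
    then have "v \<in> S u" "w \<in> S v" using S u v(1) by (auto simp: builds_one_edges_def)
    then show "w \<in> W11 P d S u" using v by (auto simp: W11_def)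
  qed
qed

lemma far_part_eq: "N \<subseteq> P - {u} \<Longrightarrow> {v \<in> N. d u v = 2} = N \<inter> far u"
  by (auto simp: far_def)

lemma far_W11_eq:
  assumes "u \<in> P" and "builds_one_edges S" and "N \<subseteq> P - {u}"
  shows "{v \<in> N. d u v = 2} \<inter> W11 P d S u = N \<inter> far u \<inter> two_hop u"
  using W11_eq[OF assms(1,2)] far_part_eq[OF assms(3)] by (auto simp: far_def)

lemma W2plus_eq:
  assumes "u \<in> P" and "builds_one_edges S" and "S u \<subseteq> P - {u}"
  shows "W2plus P d S u = S u \<inter> far u \<inter> two_hop u"
  using far_W11_eq[OF assms] by (simp add: W2plus_def W2_def)

lemma MaxDSG_eq: "u \<in> P \<Longrightarrow> MaxDSG P d u = near u \<union> (far u - two_hop u)"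
  using dist_cases by (auto simp: MaxDSG_def near_def far_def two_hop_def)

lemma MaxDSG_subset: "MaxDSG P d u \<subseteq> P - {u}"
  by (auto simp: MaxDSG_def)

lemma dominating_MaxDSG:
  assumes u: "u \<in> P"
  shows "dominating1 P d u (MaxDSG P d u)"
  unfolding dominating1_def
proof (intro conjI ballI impI MaxDSG_subset)
  fix w assume w: "w \<in> P - {u}" "w \<notin> MaxDSG P d u"
  then obtain v where "v \<in> P" "d u v = 1" "d v w = 1" by (auto simp: MaxDSG_def)
  moreover from this have "v \<in> MaxDSG P d u" using u dist_self by (auto simp: MaxDSG_def)
  ultimately show "\<exists>v\<in>MaxDSG P d u. d v w = 1" by blast
qed

text \<open>Relative to MaxDSG, a redundant 2-edge (into two_hop) costs \<alpha>, and a missing 2-edge to a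
  node outside two_hop costs 1/2 - \<alpha>: stretch 3/2 instead of 1, but one edge less.\<close>
lemma cost_above_MaxDSG:
  fixes Z \<alpha> :: real
  assumes u: "u \<in> P" and S: "builds_one_edges S"
    and N: "N \<subseteq> P - {u}" and near: "near u \<subseteq> N" and dom: "dominating1 P d u N"
  shows "cost P d Z \<alpha> (S(u := N)) u = cost P d Z \<alpha> (S(u := MaxDSG P d u)) u
     + \<alpha> * card (N \<inter> far u \<inter> two_hop u) + (1/2 - \<alpha>) * card (far u - N - two_hop u)"
proof -
  let ?F = "real (card (far u - two_hop u))"
  have "near u \<inter> far u = {}" by (auto simp: near_def far_def)
  then have near_max: "near u \<subseteq> MaxDSG P d u" and max_far: "MaxDSG P d u \<inter> far u = far u - two_hop u"
    using MaxDSG_eq[OF u] by blast+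
  have "(far u - two_hop u) \<inter> two_hop u = {}" by blast
  then have max: "cost P d Z \<alpha> (S(u := MaxDSG P d u)) u
      = card (P - {u}) + \<alpha> * card (near u) + ?F / 2 + (\<alpha> - 1/2) * ?F"
    using cost_of_dominating_strategy[OF u S MaxDSG_subset near_max dominating_MaxDSG[OF u],
        of Z \<alpha>, unfolded max_far] by simp
  have expand: "(\<alpha> - 1/2) * k = (\<alpha> - 1/2) * f + \<alpha> * m - m / 2 + (1/2 - \<alpha>) * a"
    if "a + k = f + m" for a k f m :: real
  proof -
    have "(\<alpha> - 1/2) * k = (\<alpha> - 1/2) * (f + m - a)" using that by (simp add: eq_diff_eq')
    also have "\<dots> = (\<alpha> - 1/2) * f + \<alpha> * m - m / 2 + (1/2 - \<alpha>) * a" by (simp add: field_simps)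
    finally show ?thesis .
  qed
  have "real (card (far u - N - two_hop u)) + card (N \<inter> far u)
      = ?F + card (N \<inter> far u \<inter> two_hop u)"
    using card_far_outside_two_hop[of u N] by (metis of_nat_add)
  from expand[OF this] show ?thesis
    using cost_of_dominating_strategy[OF u S N near dom, of Z \<alpha>] max by linarith
qed

lemma eq_MaxDSG_if_cost_le:
  fixes Z \<alpha> :: real
  assumes pos: "0 < \<alpha>" and small: "\<alpha> < 1/2"
    and u: "u \<in> P" and S: "builds_one_edges S" and Su: "S u \<subseteq> P - {u}"
    and dom: "dominating1 P d u (S u)"
    and le: "cost P d Z \<alpha> S u \<le> cost P d Z \<alpha> (S(u := MaxDSG P d u)) u"
  shows "S u = MaxDSG P d u"
proof -
  have near: "near u \<subseteq> S u" using S u by (simp add: builds_one_edges_def)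
  let ?redundant = "real (card (S u \<inter> far u \<inter> two_hop u))"
  let ?missing = "real (card (far u - S u - two_hop u))"
  have "\<alpha> * ?redundant + (1/2 - \<alpha>) * ?missing \<le> 0"
    using le cost_above_MaxDSG[OF u S Su near dom, of Z \<alpha>] by simp
  moreover have "0 \<le> \<alpha> * ?redundant" and "0 \<le> (1/2 - \<alpha>) * ?missing" using pos small by simp_all
  ultimately have "\<alpha> * ?redundant = 0" and "(1/2 - \<alpha>) * ?missing = 0" by linarith+
  then have redundant: "S u \<inter> far u \<inter> two_hop u = {}" and missing: "far u - S u - two_hop u = {}"
    using pos small finite_points by (simp_all add: far_def)
  show ?thesis
  proof
    show "S u \<subseteq> MaxDSG P d u"
    proof
      fix x assume x: "x \<in> S u"
      then have "x \<in> P" "x \<noteq> u" using Su by auto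
      then show "x \<in> MaxDSG P d u"
        using x redundant MaxDSG_eq[OF u] dist_cases[OF u] by (auto simp: near_def far_def)
    qed
    show "MaxDSG P d u \<subseteq> S u" using MaxDSG_eq[OF u] near missing by auto
  qed
qed

lemma DSGD:
  assumes "DSG P d S"
  shows "valid_profile P S" and "builds_one_edges S"
    and "\<And>u. u \<in> P \<Longrightarrow> S u \<subseteq> P - {u}" and "\<And>u. u \<in> P \<Longrightarrow> near u \<subseteq> S u"
    and "\<And>u. u \<in> P \<Longrightarrow> dominating1 P d u (S u)"
  using assms by (auto simp: DSG_def valid_profile_def builds_one_edges_def near_def)

text \<open>Condition (iii) of a DSG speaks only about deletions and swaps; additions never
  decrease the number of 2-edges into W_{1\<rightarrow>1}, so all greedy moves can be admitted.\<close>
lemma DSG_local_minimality: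
  assumes D: "DSG P d S" and u: "u \<in> P" and N: "N \<in> greedy_moves P u (S u)"
    and near: "near u \<subseteq> N" and dom: "dominating1 P d u N"
  shows "card (S u \<inter> far u \<inter> two_hop u) \<le> card (N \<inter> far u \<inter> two_hop u)"
proof (cases "S u \<subseteq> N")
  case True
  have "finite (far u)" using finite_points by (simp add: far_def)
  with True show ?thesis by (intro card_mono) auto
next
  case False
  have Su: "S u \<subseteq> P - {u}" and S: "builds_one_edges S" using DSGD[OF D] u by auto
  have "N \<subseteq> P - {u}" using N Su by (auto simp: greedy_moves_def)
  moreover have "\<not> card ({v \<in> N. d u v = 2} \<inter> W11 P d S u) < card (W2plus P d S u)"
    using D u N False near dom unfolding DSG_def greedy_moves_def near_def by blast
  ultimately show ?thesis using far_W11_eq[OF u S] W2plus_eq[OF u S Su] by simp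
qed

lemma DSGI:
  assumes V: "valid_profile P S" and S: "builds_one_edges S"
    and dom: "\<And>u. u \<in> P \<Longrightarrow> dominating1 P d u (S u)"
    and local_min: "\<And>u N. u \<in> P \<Longrightarrow> N \<in> greedy_moves P u (S u) \<Longrightarrow> near u \<subseteq> N \<Longrightarrow>
        dominating1 P d u N \<Longrightarrow> card (S u \<inter> far u \<inter> two_hop u) \<le> card (N \<inter> far u \<inter> two_hop u)"
  shows "DSG P d S"
proof -
  have one_edges: "\<forall>v\<in>P. \<forall>w\<in>P. v \<noteq> w \<longrightarrow> d v w = 1 \<longrightarrow> w \<in> S v"
    using S by (auto simp: builds_one_edges_def near_def)
  show ?thesis
    unfolding DSG_def
  proof (intro one_edges conjI ballI notI V dom)
  fix u assume u: "u \<in> P"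
  have Su: "S u \<subseteq> P - {u}" using V u by (auto simp: valid_profile_def)
  assume "\<exists>N'. (N' \<in> {S u - {x} |x. x \<in> S u} \<or>
      N' \<in> {S u - {x} \<union> {y} |x y. x \<in> S u \<and> y \<in> P - {u} - S u}) \<and>
    {v \<in> P. v \<noteq> u \<and> d u v = 1} \<subseteq> N' \<and> dominating1 P d u N' \<and>
    card ({v \<in> N'. d u v = 2} \<inter> W11 P d S u) < card (W2plus P d S u)"
  then obtain N where N: "N \<in> greedy_moves P u (S u)" "near u \<subseteq> N" "dominating1 P d u N"
    and less: "card ({v \<in> N. d u v = 2} \<inter> W11 P d S u) < card (W2plus P d S u)"
    unfolding greedy_moves_def near_def by blast
  have "N \<subseteq> P - {u}" using N(1) Su by (auto simp: greedy_moves_def)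
  then show False
    using less local_min[OF u N] far_W11_eq[OF u S] W2plus_eq[OF u S Su] by simp
  qed
qed

end

locale greedy_routing_game = one_two_metric_space +
  fixes \<alpha> Z :: real
  assumes price_nonneg: "0 \<le> \<alpha>"
    and penalty_large: "(2 + \<alpha>) * (card P + 1) \<le> Z"
begin

text \<open>The penalty Z exceeds every possible cost of a strategy that reaches all nodes, so
  fewer unreachable nodes always means a lower cost.\<close>
lemma cost_less_if_fewer_unreachable:
  assumes u: "u \<in> P" and Ta: "Ta u \<subseteq> P - {u}"
    and fewer: "card (unreachable Ta u) < card (unreachable Tb u)"
  shows "cost P d Z \<alpha> Ta u < cost P d Z \<alpha> Tb u"
proof -
  let ?n = "real (card P)"
  have "0 \<le> (2 + \<alpha>) * (card P + 1)" using price_nonneg by simp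
  then have Z_nonneg: "0 \<le> Z" using penalty_large by linarith
  have "(\<Sum>v\<in>P - {u} - unreachable Ta u. stretch Z d Ta u v) \<le> (\<Sum>v\<in>P - {u} - unreachable Ta u. 3/2)"
  proof (intro sum_mono)
    fix v assume "v \<in> P - {u} - unreachable Ta u"
    then have "stretch Z d Ta u v \<in> {1, 3/2}"
      by (intro stretch_if_reachable[where T=Ta, OF u _ _ Ta]) (auto simp: unreachable_def)
    then show "stretch Z d Ta u v \<le> 3/2" by auto
  qed
  also have "\<dots> \<le> 3/2 * ?n"
    using card_mono[OF finite_points, of "P - {u} - unreachable Ta u"] by auto
  finally have reach_a: "(\<Sum>v\<in>P - {u} - unreachable Ta u. stretch Z d Ta u v) \<le> 3/2 * ?n" .
  have "card (Ta u) \<le> card P" using Ta by (intro card_mono[OF finite_points]) auto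
  then have edges_a: "\<alpha> * card (Ta u) \<le> \<alpha> * ?n" using price_nonneg by (simp add: mult_left_mono)
  have reach_b: "0 \<le> (\<Sum>v\<in>P - {u} - unreachable Tb u. stretch Z d Tb u v)"
    by (intro sum_nonneg) (auto simp: stretch_def unreachable_def)
  have "cost P d Z \<alpha> Ta u \<le> Z * card (unreachable Ta u) + 3/2 * ?n + \<alpha> * ?n"
    using cost_eq_penalty_plus_reachable[of Z \<alpha> Ta u] reach_a edges_a by linarith
  also have "\<dots> < Z * (card (unreachable Ta u) + 1)"
    using penalty_large price_nonneg by (simp add: algebra_simps)
  also have "\<dots> \<le> Z * card (unreachable Tb u)"
    using fewer Z_nonneg by (intro mult_left_mono) auto
  also have "\<dots> \<le> cost P d Z \<alpha> Tb u"
    using cost_eq_penalty_plus_reachable[of Z \<alpha> Tb u] reach_b price_nonneg by simp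
  finally show ?thesis .
qed

lemma no_unreachable_if_no_improving_addition:
  assumes u: "u \<in> P" and Su: "S u \<subseteq> P - {u}"
    and no_better: "\<And>w. w \<in> P - {u} - S u \<Longrightarrow>
      cost P d Z \<alpha> S u \<le> cost P d Z \<alpha> (S(u := insert w (S u))) u"
  shows "unreachable S u = {}"
proof (rule ccontr)
  assume "unreachable S u \<noteq> {}"
  then obtain w where w: "w \<in> unreachable S u" by blast
  then have "w \<in> P - {u} - S u"
    using greedy_path_exists_iff[OF u, of w S] by (auto simp: unreachable_def)
  moreover have "cost P d Z \<alpha> (S(u := insert w (S u))) u < cost P d Z \<alpha> S u"
    using calculation Su card_unreachable_insert_less[OF u w]
    by (intro cost_less_if_fewer_unreachable[OF u]) auto
  ultimately show False using no_better by fastforce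
qed

lemma greedy_eqD:
  assumes G: "greedy_eq P d Z \<alpha> S"
  shows "builds_one_edges S" and "\<And>u. u \<in> P \<Longrightarrow> dominating1 P d u (S u)"
proof -
  have none: "unreachable S u = {}" and Su: "S u \<subseteq> P - {u}" if u: "u \<in> P" for u
  proof -
    show Su: "S u \<subseteq> P - {u}" using G u by (auto simp: greedy_eq_def valid_profile_def)
    have "insert w (S u) \<in> greedy_moves P u (S u)" if "w \<in> P - {u} - S u" for w
      using that unfolding greedy_moves_def by blast
    then show "unreachable S u = {}"
      using G u by (intro no_unreachable_if_no_improving_addition[where S=S, OF u Su]) (auto simp: greedy_eq_def)
  qed
  show "builds_one_edges S"
    using no_unreachable_imp_dominating(1)[OF _ Su none] by (auto simp: builds_one_edges_def)
  show "\<And>u. u \<in> P \<Longrightarrow> dominating1 P d u (S u)"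
    using no_unreachable_imp_dominating(2)[OF _ Su none] by blast
qed

lemma deviation_worse_or_dominating:
  assumes u: "u \<in> P" and Su: "S u \<subseteq> P - {u}" and S: "builds_one_edges S"
    and dom: "dominating1 P d u (S u)" and S': "S' \<subseteq> P - {u}"
  shows "cost P d Z \<alpha> S u < cost P d Z \<alpha> (S(u := S')) u \<or> (near u \<subseteq> S' \<and> dominating1 P d u S')"
proof (cases "unreachable (S(u := S')) u = {}")
  case True
  then show ?thesis using no_unreachable_imp_dominating[of u "S(u := S')"] u S' by simp
next
  case False
  then have "card (unreachable S u) < card (unreachable (S(u := S')) u)"
    using no_unreachable_if_dominating[OF u Su S dom] finite_unreachable by (simp add: card_gt_0_iff)
  then show ?thesis using cost_less_if_fewer_unreachable[where Ta=S, OF u Su] by blast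
qed

lemma greedy_eq_if_DSG:
  assumes half: "1/2 \<le> \<alpha>" and D: "DSG P d S" and min: "\<alpha> = 1/2 \<or> MinDSG P d S"
  shows "greedy_eq P d Z \<alpha> S"
  unfolding greedy_eq_def
proof (intro conjI ballI DSGD(1)[OF D])
  fix u S' assume u: "u \<in> P" and S': "S' \<in> greedy_moves P u (S u)"
  have Su: "S u \<subseteq> P - {u}" and S: "builds_one_edges S" and near: "near u \<subseteq> S u"
    and dom: "dominating1 P d u (S u)" using DSGD[OF D] u by auto
  have S'P: "S' \<subseteq> P - {u}" using S' Su by (auto simp: greedy_moves_def)
  consider "cost P d Z \<alpha> S u < cost P d Z \<alpha> (S(u := S')) u" | "near u \<subseteq> S'" "dominating1 P d u S'"
    using deviation_worse_or_dominating[OF u Su S dom S'P] by blast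
  then show "cost P d Z \<alpha> S u \<le> cost P d Z \<alpha> (S(u := S')) u"
  proof cases
    case 2
    have "card (S u \<inter> far u \<inter> two_hop u) \<le> card (S' \<inter> far u \<inter> two_hop u)"
      using DSG_local_minimality[OF D u S' 2] .
    moreover have "(\<alpha> - 1/2) * card (S u \<inter> far u) \<le> (\<alpha> - 1/2) * card (S' \<inter> far u)"
    proof (cases "\<alpha> = 1/2")
      case False
      then have "card (W2 d S u) \<le> card {v \<in> S'. d u v = 2}"
        using min u S'P 2 unfolding MinDSG_def near_def by blast
      then have "card (S u \<inter> far u) \<le> card (S' \<inter> far u)" using W2_eq[where S=S, OF Su] far_part_eq[OF S'P] by simp
      then show ?thesis using half by (intro mult_left_mono) auto
    next
      case True
      show ?thesis by (simp add: True)
    qed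
    ultimately show ?thesis
      using cost_of_dominating_strategy[OF u S Su near dom, of Z \<alpha>]
        cost_of_dominating_strategy[OF u S S'P 2, of Z \<alpha>] by simp
  qed simp
qed

lemma DSG_if_greedy_eq_half:
  assumes half: "\<alpha> = 1/2" and G: "greedy_eq P d Z \<alpha> S"
  shows "DSG P d S"
proof (rule DSGI)
  show V: "valid_profile P S" using G by (simp add: greedy_eq_def)
  show S: "builds_one_edges S" and dom: "\<And>u. u \<in> P \<Longrightarrow> dominating1 P d u (S u)"
    using greedy_eqD[OF G] by auto
  fix u N assume u: "u \<in> P" and N: "N \<in> greedy_moves P u (S u)"
    and near: "near u \<subseteq> N" and domN: "dominating1 P d u N"
  have Su: "S u \<subseteq> P - {u}" using V u by (auto simp: valid_profile_def)
  have NP: "N \<subseteq> P - {u}" using N Su by (auto simp: greedy_moves_def)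
  have near_u: "near u \<subseteq> S u" using S u by (simp add: builds_one_edges_def)
  have "cost P d Z \<alpha> S u \<le> cost P d Z \<alpha> (S(u := N)) u" using G u N by (simp add: greedy_eq_def)
  then show "card (S u \<inter> far u \<inter> two_hop u) \<le> card (N \<inter> far u \<inter> two_hop u)"
    using cost_of_dominating_strategy[OF u S Su near_u dom[OF u], of Z \<alpha>]
      cost_of_dominating_strategy[OF u S NP near domN, of Z \<alpha>] half by simp
qed

lemma nash_eq_half_iff:
  assumes half: "\<alpha> = 1/2"
  shows "nash_eq P d Z \<alpha> S \<longleftrightarrow> DSG P d S \<and> (\<forall>u\<in>P. W2plus P d S u = {})"
proof
  assume N: "nash_eq P d Z \<alpha> S"
  have D: "DSG P d S" using DSG_if_greedy_eq_half[OF half nash_eq_imp_greedy_eq[OF N]] .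
  have "W2plus P d S u = {}" if u: "u \<in> P" for u
  proof -
    have Su: "S u \<subseteq> P - {u}" and S: "builds_one_edges S" and near: "near u \<subseteq> S u"
      and dom: "dominating1 P d u (S u)" using DSGD[OF D] u by auto
    have "cost P d Z \<alpha> S u \<le> cost P d Z \<alpha> (S(u := MaxDSG P d u)) u"
      using N u MaxDSG_subset by (simp add: nash_eq_def)
    then have "card (S u \<inter> far u \<inter> two_hop u) = 0"
      using cost_above_MaxDSG[OF u S Su near dom, of Z \<alpha>] half by simp
    then show ?thesis using W2plus_eq[OF u S Su] finite_points by (simp add: far_def)
  qed
  with D show "DSG P d S \<and> (\<forall>u\<in>P. W2plus P d S u = {})" by blast
next
  assume "DSG P d S \<and> (\<forall>u\<in>P. W2plus P d S u = {})"
  then have D: "DSG P d S" and W: "\<And>u. u \<in> P \<Longrightarrow> W2plus P d S u = {}" by auto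
  show "nash_eq P d Z \<alpha> S"
    unfolding nash_eq_def
  proof (intro conjI ballI allI impI DSGD(1)[OF D])
    fix u S' assume u: "u \<in> P" and S'P: "S' \<subseteq> P - {u}"
    have Su: "S u \<subseteq> P - {u}" and S: "builds_one_edges S" and near: "near u \<subseteq> S u"
      and dom: "dominating1 P d u (S u)" using DSGD[OF D] u by auto
    consider "cost P d Z \<alpha> S u < cost P d Z \<alpha> (S(u := S')) u" | "near u \<subseteq> S'" "dominating1 P d u S'"
      using deviation_worse_or_dominating[OF u Su S dom S'P] by blast
    then show "cost P d Z \<alpha> S u \<le> cost P d Z \<alpha> (S(u := S')) u"
    proof cases
      case 2
      have "S u \<inter> far u \<inter> two_hop u = {}" using W[OF u] W2plus_eq[OF u S Su] by simp
      then show ?thesis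
        using cost_of_dominating_strategy[OF u S Su near dom, of Z \<alpha>]
          cost_of_dominating_strategy[OF u S S'P 2, of Z \<alpha>] by (simp add: half)
    qed simp
  qed
qed

lemma nash_eq_iff_MaxDSG:
  assumes pos: "0 < \<alpha>" and small: "\<alpha> < 1/2"
  shows "nash_eq P d Z \<alpha> S \<longleftrightarrow> valid_profile P S \<and> (\<forall>u\<in>P. S u = MaxDSG P d u)"
proof
  assume N: "nash_eq P d Z \<alpha> S"
  have V: "valid_profile P S" using N by (simp add: nash_eq_def)
  have S: "builds_one_edges S" and dom: "\<And>u. u \<in> P \<Longrightarrow> dominating1 P d u (S u)"
    using greedy_eqD[OF nash_eq_imp_greedy_eq[OF N]] by auto
  have "S u = MaxDSG P d u" if u: "u \<in> P" for u
  proof (rule eq_MaxDSG_if_cost_le[OF pos small u S _ dom[OF u]])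
    show "S u \<subseteq> P - {u}" using V u by (auto simp: valid_profile_def)
    show "cost P d Z \<alpha> S u \<le> cost P d Z \<alpha> (S(u := MaxDSG P d u)) u"
      using N u MaxDSG_subset by (simp add: nash_eq_def)
  qed
  with V show "valid_profile P S \<and> (\<forall>u\<in>P. S u = MaxDSG P d u)" by blast
next
  assume "valid_profile P S \<and> (\<forall>u\<in>P. S u = MaxDSG P d u)"
  then have V: "valid_profile P S" and max: "\<And>u. u \<in> P \<Longrightarrow> S u = MaxDSG P d u" by auto
  have S: "builds_one_edges S" using max MaxDSG_eq by (auto simp: builds_one_edges_def)
  show "nash_eq P d Z \<alpha> S"
    unfolding nash_eq_def
  proof (intro conjI ballI allI impI V)
    fix u S' assume u: "u \<in> P" and S'P: "S' \<subseteq> P - {u}"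
    have dom: "dominating1 P d u (S u)" using dominating_MaxDSG[OF u] max[OF u] by simp
    consider "cost P d Z \<alpha> S u < cost P d Z \<alpha> (S(u := S')) u" | "near u \<subseteq> S'" "dominating1 P d u S'"
      using deviation_worse_or_dominating[OF u MaxDSG_subset[of u, folded max[OF u]] S dom S'P] by blast
    then show "cost P d Z \<alpha> S u \<le> cost P d Z \<alpha> (S(u := S')) u"
    proof cases
      case 2
      have "S(u := MaxDSG P d u) = S" using max[OF u] by (rule fun_upd_idem)
      moreover have "0 \<le> \<alpha> * card (S' \<inter> far u \<inter> two_hop u)"
        and "0 \<le> (1/2 - \<alpha>) * card (far u - S' - two_hop u)" using pos small by simp_all
      ultimately show ?thesis using cost_above_MaxDSG[OF u S S'P 2, of Z \<alpha>] by simp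
    qed simp
  qed
qed

end

theorem theorem2p8:
  fixes P :: "'a set" and d :: "'a \<Rightarrow> 'a \<Rightarrow> nat" and \<alpha> :: real
  assumes "one_two_metric P d" and "\<alpha> > 0"
  shows "\<exists>Z0::real. \<forall>Z\<ge>Z0.
    (\<alpha> < 1/2 \<longrightarrow> (\<forall>S. nash_eq P d Z \<alpha> S \<longleftrightarrow> valid_profile P S \<and> (\<forall>u\<in>P. S u = MaxDSG P d u))) \<and>
    (\<alpha> = 1/2 \<longrightarrow>
       (\<forall>S. greedy_eq P d Z \<alpha> S \<longleftrightarrow> DSG P d S) \<and>
       (\<forall>S. nash_eq P d Z \<alpha> S \<longleftrightarrow> DSG P d S \<and> (\<forall>u\<in>P. W2plus P d S u = {}))) \<and>
    (\<alpha> > 1/2 \<longrightarrow> (\<forall>S. MinDSG P d S \<longrightarrow> greedy_eq P d Z \<alpha> S))"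
proof (intro exI[of _ "(2 + \<alpha>) * (card P + 1)"] allI impI conjI)
  fix Z S assume "(2 + \<alpha>) * (card P + 1) \<le> Z"
  then interpret greedy_routing_game P d \<alpha> Z
    using assms by unfold_locales auto
  show "nash_eq P d Z \<alpha> S \<longleftrightarrow> valid_profile P S \<and> (\<forall>u\<in>P. S u = MaxDSG P d u)" if "\<alpha> < 1/2"
    using nash_eq_iff_MaxDSG assms(2) that .
  show "greedy_eq P d Z \<alpha> S \<longleftrightarrow> DSG P d S" if "\<alpha> = 1/2"
    using DSG_if_greedy_eq_half[OF that] greedy_eq_if_DSG[of S] by (auto simp: that)
  show "nash_eq P d Z \<alpha> S \<longleftrightarrow> DSG P d S \<and> (\<forall>u\<in>P. W2plus P d S u = {})" if "\<alpha> = 1/2"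
    using nash_eq_half_iff that .
  show "greedy_eq P d Z \<alpha> S" if "1/2 < \<alpha>" "MinDSG P d S"
    using greedy_eq_if_DSG that by (simp add: MinDSG_def)
qed

end
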